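(* Let $q\ge3$ be an integer, let $c_1,\dots,c_q$ be nonnegative integers, and let $s=\sum_{i=1}^q c_i$. Then \[ \sum_{j=1}^q\sum_{k=0}^{c_j-1}\Big(\big((q-2)c_j-(q-1)k+s\big)\prod_{m=1}^{q-3}(s-k+m)\Big)=\prod_{m=2}^{q}(s+q-m). \]
   Context: An empty sum equals $0$ and an empty product equals $1$. *)

theory Defs
  imports Main
begin

end

theory Submission
  imports Defs "HOL.Factorial"
begin

text \<open>In terms of the rising factorial \<open>pochhammer x n = x (x+1) \<cdots> (x+n-1)\<close>, the inner
  product is \<open>pochhammer (s-k+1) (q-3)\<close> and the right-hand side is \<open>pochhammer s (q-1)\<close>.
  Since \<open>pochhammer a (n+1) - pochhammer (a-1) (n+1) = (n+1) pochhammer a n\<close>, sums of rising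
  factorials telescope, and an induction on \<open>c\<^sub>j\<close> shows that the \<open>j\<close>-th block of the double sum
  equals \<open>c\<^sub>j pochhammer (s+1) (q-2)\<close>. Summing over \<open>j\<close> gives
  \<open>s pochhammer (s+1) (q-2) = pochhammer s (q-1)\<close>.\<close>

lemma pochhammer_Suc_diff_pred:
  fixes a :: "'a :: comm_ring_1"
  shows "pochhammer a (Suc n) - pochhammer (a - 1) (Suc n) = of_nat (Suc n) * pochhammer a n"
proof -
  have "pochhammer (a - 1) (Suc n) = (a - 1) * pochhammer a n"
    using pochhammer_rec[of "a - 1" n] by simp
  then show ?thesis
    by (simp add: pochhammer_Suc algebra_simps)
qed

lemma sum_pochhammer_telescope:
  fixes a :: "'a :: comm_ring_1"
  shows "(\<Sum>k<c. of_nat (Suc n) * pochhammer (a - of_nat k) n)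
         = pochhammer a (Suc n) - pochhammer (a - of_nat c) (Suc n)"
proof -
  have "(\<Sum>k<c. of_nat (Suc n) * pochhammer (a - of_nat k) n)
        = (\<Sum>k<c. pochhammer (a - of_nat k) (Suc n) - pochhammer (a - of_nat (Suc k)) (Suc n))"
    using pochhammer_Suc_diff_pred[of "a - of_nat _" n] by (simp add: algebra_simps)
  also have "\<dots> = pochhammer a (Suc n) - pochhammer (a - of_nat c) (Suc n)"
    by (subst sum_lessThan_telescope') simp
  finally show ?thesis .
qed

lemma sum_block_pochhammer:
  fixes a :: "'a :: comm_ring_1"
  shows "(\<Sum>k<c. (of_nat (Suc n) * of_nat c - of_nat (Suc (Suc n)) * of_nat k + a)
                   * pochhammer (a + 1 - of_nat k) n)
         = of_nat c * pochhammer (a + 1) (Suc n)"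
proof (induction c)
  case 0
  show ?case by simp
next
  case (Suc c)
  let ?P = "\<lambda>k. pochhammer (a + 1 - of_nat k) n"
  have "(\<Sum>k<Suc c. (of_nat (Suc n) * of_nat (Suc c) - of_nat (Suc (Suc n)) * of_nat k + a) * ?P k)
        = (\<Sum>k<c. (of_nat (Suc n) * of_nat c - of_nat (Suc (Suc n)) * of_nat k + a) * ?P k
                    + of_nat (Suc n) * ?P k)
          + (a + 1 + of_nat n - of_nat c) * ?P c"
    by (simp only: sum.lessThan_Suc) (simp add: algebra_simps)
  also have "\<dots> = (\<Sum>k<c. (of_nat (Suc n) * of_nat c - of_nat (Suc (Suc n)) * of_nat k + a) * ?P k)
          + (\<Sum>k<c. of_nat (Suc n) * ?P k)
          + (a + 1 + of_nat n - of_nat c) * ?P c"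
    by (simp only: sum.distrib)
  also have "\<dots> = of_nat c * pochhammer (a + 1) (Suc n)
          + (pochhammer (a + 1) (Suc n) - pochhammer (a + 1 - of_nat c) (Suc n))
          + (a + 1 + of_nat n - of_nat c) * ?P c"
    by (simp only: Suc.IH sum_pochhammer_telescope)
  also have "\<dots> = of_nat (Suc c) * pochhammer (a + 1) (Suc n)"
    by (simp add: pochhammer_Suc algebra_simps)
  finally show ?case .
qed

lemma prod_descending_eq_pochhammer:
  fixes s :: "'a :: comm_ring_1"
  shows "(\<Prod>m=2..q. s + of_nat q - of_nat m) = pochhammer s (q - 1)"
proof -
  have "(\<Prod>m=2..q. s + of_nat q - of_nat m) = (\<Prod>i=1..q-1. s + of_nat (q - 1 - i))"
  proof (rule prod.reindex_bij_witness[where i = "\<lambda>i. i + 1" and j = "\<lambda>m. m - 1"])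
    fix m assume "m \<in> {2..q}"
    then show "s + of_nat (q - 1 - (m - 1)) = s + of_nat q - of_nat m"
      by (simp add: of_nat_diff algebra_simps)
  qed auto
  then show ?thesis
    by (simp add: pochhammer_prod_rev)
qed

theorem lemmaA2:
  fixes q :: nat and c :: "nat \<Rightarrow> nat" and s :: int
  assumes "q \<ge> 3"
    and "s = (\<Sum>i=1..q. int (c i))"
  shows "(\<Sum>j=1..q. \<Sum>k\<in>{0..<c j}.
            (int (q - 2) * int (c j) - int (q - 1) * int k + s)
              * (\<Prod>m=1..q-3. s - int k + int m))
         = (\<Prod>m=2..q. s + int q - int m)"
proof -
  obtain n where q: "q = n + 3" using assms(1) le_Suc_ex by (metis add.commute)
  have three: "q - 3 = n" by (simp add: q)
  have rising: "(\<Prod>m=1..n. s - int k + int m) = pochhammer (s + 1 - int k) n" for k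
    by (simp add: prod.atLeast1_atMost_eq pochhammer_prod atLeast0LessThan algebra_simps)
  have block: "(\<Sum>k\<in>{0..<c j}.
            (int (q - 2) * int (c j) - int (q - 1) * int k + s)
              * (\<Prod>m=1..q-3. s - int k + int m))
        = int (c j) * pochhammer (s + 1) (Suc n)" for j
    unfolding three rising using sum_block_pochhammer[of n "c j" s]
    by (simp add: q atLeast0LessThan)
  have "(\<Sum>j=1..q. \<Sum>k\<in>{0..<c j}.
            (int (q - 2) * int (c j) - int (q - 1) * int k + s)
              * (\<Prod>m=1..q-3. s - int k + int m))
        = (\<Sum>j=1..q. int (c j) * pochhammer (s + 1) (Suc n))"
    by (simp only: block)
  also have "\<dots> = s * pochhammer (s + 1) (Suc n)"
    by (simp add: assms(2) sum_distrib_right)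
  also have "\<dots> = pochhammer s (q - 1)"
    by (simp add: q pochhammer_rec numeral_eq_Suc)
  also have "\<dots> = (\<Prod>m=2..q. s + int q - int m)"
    by (rule prod_descending_eq_pochhammer[symmetric])
  finally show ?thesis .
qed

end
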